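(* Let $(\mathcal{O},g,f)$ be an oriented matroid program with $\mathcal{O}$ of rank $r\ge 3$, and let $(C,X,Y)$ be a modular triple of cocircuits such that $z(C\circ X\circ Y)$ is a flat of rank $r-3$ of $\mathcal{M}(\mathcal{O})$, with $X_g=Y_g=+$ and $C_g=C_f=0$. Let $X^1,Y^1$ be distinct cocircuits with $X^1_g=Y^1_g=+$ such that $z(X^1)\supseteq z(X\circ C)$, $z(Y^1)\supseteq z(Y\circ C)$, $X\neq X^1\neq C$, $Y\neq Y^1\neq C$, and $X^1\circ Y^1$ is an edge. Then $X^1\leftrightarrow_{g,f}X$ and $Y^1\leftrightarrow_{g,f}Y$, and moreover $X^1\to_{g,f}Y^1$ if and only if $X\to_{g,f}Y$.
   Context: Oriented matroid $\mathcal{O}$ of rank $r$ on finite $E$, given by its cocircuits (sign vectors in $\{+,-,0\}^E$), underlying matroid $\mathcal{M}(\mathcal{O})$. Notation: $z(X)$ zero set, $\operatorname{sep}(X,Y)=\{e:X_e=-Y_e\ne0\}$, $(X\circ Y)_e=X_e$ if $X_e\ne0$, else $Y_e$. An edge is a covector whose zero set is a flat of rank $r-2$; cocircuits $X\ne\pm Y$ are comodular if $X\circ Y$ is an edge. A modular triple of cocircuits $(C,X,Y)$ is one in which each of the three pairs is comodular. For comodular $X,Y$ and $e\in\operatorname{sep}(X,Y)$, cocircuit elimination of $e$ between $X$ and $Y$ yields the unique cocircuit $Z$ with $Z_e=0$ and $Z_h=(X\circ Y)_h$ for $h\notin\operatorname{sep}(X,Y)$. An oriented matroid program $(\mathcal{O},g,f)$: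 $g\neq f\in E$, $g$ not a loop, $f$ not a coloop. For comodular $X,Y$ with $X_g=Y_g\ne0$, let $Z$ be obtained by eliminating $g$ between $-X$ and $Y$; $X\to_{g,f}Y$ if $Z_f=+$, $X\leftarrow_{g,f}Y$ if $Z_f=-$, $X\leftrightarrow_{g,f}Y$ if $Z_f=0$. *)

theory Defs
  imports Main
begin

datatype sign = Neg | Zer | Pos

fun sneg :: "sign \<Rightarrow> sign" where
  "sneg Neg = Pos" | "sneg Zer = Zer" | "sneg Pos = Neg"

type_synonym 'e signvec = "'e \<Rightarrow> sign"

definition zerovec :: "'e signvec" where "zerovec = (\<lambda>_. Zer)"

definition vneg :: "'e signvec \<Rightarrow> 'e signvec" where
  "vneg X = (\<lambda>e. sneg (X e))"

definition supp :: "'e signvec \<Rightarrow> 'e set" where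
  "supp X = {e. X e \<noteq> Zer}"

definition zset :: "'e set \<Rightarrow> 'e signvec \<Rightarrow> 'e set" where
  "zset E X = {e \<in> E. X e = Zer}"

definition sep :: "'e signvec \<Rightarrow> 'e signvec \<Rightarrow> 'e set" where
  "sep X Y = {e. X e \<noteq> Zer \<and> X e = sneg (Y e)}"

definition comp :: "'e signvec \<Rightarrow> 'e signvec \<Rightarrow> 'e signvec" (infixr "\<circ>\<^sub>s" 70) where
  "comp X Y = (\<lambda>e. if X e \<noteq> Zer then X e else Y e)"

definition oriented_matroid :: "'e set \<Rightarrow> 'e signvec set \<Rightarrow> bool" where
  "oriented_matroid E \<C> \<longleftrightarrow>
     finite E \<and>
     (\<forall>X\<in>\<C>. supp X \<subseteq> E) \<and>
     zerovec \<notin> \<C> \<and>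
     (\<forall>X\<in>\<C>. vneg X \<in> \<C>) \<and>
     (\<forall>X\<in>\<C>. \<forall>Y\<in>\<C>. supp X \<subseteq> supp Y \<longrightarrow> X = Y \<or> X = vneg Y) \<and>
     (\<forall>X\<in>\<C>. \<forall>Y\<in>\<C>. \<forall>e. X \<noteq> vneg Y \<and> e \<in> sep X Y \<longrightarrow>
        (\<exists>Z\<in>\<C>. Z e = Zer \<and> {h. Z h = Pos} \<subseteq> {h. X h = Pos} \<union> {h. Y h = Pos}
                        \<and> {h. Z h = Neg} \<subseteq> {h. X h = Neg} \<union> {h. Y h = Neg}))"

inductive_set covectors :: "'e signvec set \<Rightarrow> 'e signvec set" for \<C> where
  zero: "zerovec \<in> covectors \<C>"
| comp: "X \<in> \<C> \<Longrightarrow> V \<in> covectors \<C> \<Longrightarrow> X \<circ>\<^sub>s V \<in> covectors \<C>"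

definition flats :: "'e set \<Rightarrow> 'e signvec set \<Rightarrow> 'e set set" where
  "flats E \<C> = {zset E V | V. V \<in> covectors \<C>}"

text \<open>Rank of a flat of the underlying matroid: length of a longest strict chain of flats
  ending in it (geometric lattice of flats).\<close>
definition flat_rank :: "'e set \<Rightarrow> 'e signvec set \<Rightarrow> 'e set \<Rightarrow> nat" where
  "flat_rank E \<C> F = Max {length L - 1 | L. L \<noteq> [] \<and> set L \<subseteq> flats E \<C>
                              \<and> sorted_wrt (\<subset>) L \<and> last L = F}"

definition om_rank :: "'e set \<Rightarrow> 'e signvec set \<Rightarrow> nat" where
  "om_rank E \<C> = flat_rank E \<C> E"

definition is_flat_of_rank :: "'e set \<Rightarrow> 'e signvec set \<Rightarrow> 'e set \<Rightarrow> nat \<Rightarrow> bool" where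
  "is_flat_of_rank E \<C> F k \<longleftrightarrow> F \<in> flats E \<C> \<and> flat_rank E \<C> F = k"

definition is_edge :: "'e set \<Rightarrow> 'e signvec set \<Rightarrow> 'e signvec \<Rightarrow> bool" where
  "is_edge E \<C> V \<longleftrightarrow> V \<in> covectors \<C> \<and> is_flat_of_rank E \<C> (zset E V) (om_rank E \<C> - 2)"

definition comodular :: "'e set \<Rightarrow> 'e signvec set \<Rightarrow> 'e signvec \<Rightarrow> 'e signvec \<Rightarrow> bool" where
  "comodular E \<C> X Y \<longleftrightarrow> X \<in> \<C> \<and> Y \<in> \<C> \<and> X \<noteq> Y \<and> X \<noteq> vneg Y \<and> is_edge E \<C> (X \<circ>\<^sub>s Y)"

definition modular_triple :: "'e set \<Rightarrow> 'e signvec set \<Rightarrow> 'e signvec \<Rightarrow> 'e signvec \<Rightarrow> 'e signvec \<Rightarrow> bool" where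
  "modular_triple E \<C> C X Y \<longleftrightarrow> comodular E \<C> C X \<and> comodular E \<C> C Y \<and> comodular E \<C> X Y"

text \<open>Cocircuit elimination of e between comodular X, Y: the unique cocircuit Z with
  Z_e = 0 and Z_h = (X o Y)_h for h not in sep(X,Y).\<close>
definition elim :: "'e signvec set \<Rightarrow> 'e signvec \<Rightarrow> 'e signvec \<Rightarrow> 'e \<Rightarrow> 'e signvec" where
  "elim \<C> X Y e = (THE Z. Z \<in> \<C> \<and> Z e = Zer \<and> (\<forall>h. h \<notin> sep X Y \<longrightarrow> Z h = (X \<circ>\<^sub>s Y) h))"

definition is_loop :: "'e signvec set \<Rightarrow> 'e \<Rightarrow> bool" where
  "is_loop \<C> e \<longleftrightarrow> (\<forall>X\<in>\<C>. X e = Zer)"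

definition is_coloop :: "'e signvec set \<Rightarrow> 'e \<Rightarrow> bool" where
  "is_coloop \<C> e \<longleftrightarrow> (\<exists>X\<in>\<C>. supp X = {e})"

definition om_program :: "'e set \<Rightarrow> 'e signvec set \<Rightarrow> 'e \<Rightarrow> 'e \<Rightarrow> bool" where
  "om_program E \<C> g f \<longleftrightarrow> oriented_matroid E \<C> \<and> g \<in> E \<and> f \<in> E \<and> g \<noteq> f
      \<and> \<not> is_loop \<C> g \<and> \<not> is_coloop \<C> f"

definition prog_pair :: "'e set \<Rightarrow> 'e signvec set \<Rightarrow> 'e \<Rightarrow> 'e signvec \<Rightarrow> 'e signvec \<Rightarrow> bool" where
  "prog_pair E \<C> g X Y \<longleftrightarrow> comodular E \<C> X Y \<and> X g = Y g \<and> X g \<noteq> Zer"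

definition arrow_to :: "'e set \<Rightarrow> 'e signvec set \<Rightarrow> 'e \<Rightarrow> 'e \<Rightarrow> 'e signvec \<Rightarrow> 'e signvec \<Rightarrow> bool" where
  "arrow_to E \<C> g f X Y \<longleftrightarrow> prog_pair E \<C> g X Y \<and> elim \<C> (vneg X) Y g f = Pos"

definition arrow_from :: "'e set \<Rightarrow> 'e signvec set \<Rightarrow> 'e \<Rightarrow> 'e \<Rightarrow> 'e signvec \<Rightarrow> 'e signvec \<Rightarrow> bool" where
  "arrow_from E \<C> g f X Y \<longleftrightarrow> prog_pair E \<C> g X Y \<and> elim \<C> (vneg X) Y g f = Neg"

definition arrow_both :: "'e set \<Rightarrow> 'e signvec set \<Rightarrow> 'e \<Rightarrow> 'e \<Rightarrow> 'e signvec \<Rightarrow> 'e signvec \<Rightarrow> bool" where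
  "arrow_both E \<C> g f X Y \<longleftrightarrow> prog_pair E \<C> g X Y \<and> elim \<C> (vneg X) Y g f = Zer"

end

(*
  Cocircuits whose zero sets contain a fixed coline N (a flat of rank r - 2, such as the zero
  set of an edge) behave like the cocircuits of a rank 2 oriented matroid: if two of them agree
  in sign at one zero of a third such cocircuit C, they agree on the whole zero set of C. For
  the coline of a comodular pair this makes cocircuit elimination well defined.

  Eliminating g between -X1 and X gives a cocircuit through the coline z(X \<circ> C) that vanishes
  at g, like C; so it is +-C and vanishes at f, i.e. X1 <-> X. For the equivalence, the
  eliminants Z of (-X, Y) and Z1 of (-X1, Y1) at g agree at a point h of z(X \<circ> C) outside
  z(C \<circ> X \<circ> Y). Both vanish on the rank r - 3 flat z(C \<circ> X \<circ> Y) and at g, so Z, Z1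
  and C pass through the common coline z(Z \<circ> C), and the agreement property at the zero f
  of C gives Z_f = Z1_f.
*)

theory Submission
  imports Defs
begin

lemma sneg_sneg [simp]: "sneg (sneg s) = s"
  by (cases s) auto

lemma sneg_eq_Zer_iff [simp]: "sneg s = Zer \<longleftrightarrow> s = Zer"
  by (cases s) auto

lemma sneg_eq_self_iff [simp]: "sneg s = s \<longleftrightarrow> s = Zer" "s = sneg s \<longleftrightarrow> s = Zer"
  by (cases s; simp)+

lemma vneg_apply [simp]: "vneg X e = sneg (X e)"
  by (simp add: vneg_def)

lemma vneg_vneg [simp]: "vneg (vneg X) = X"
  by (simp add: vneg_def)

lemma vneg_eq_iff: "vneg X = Y \<longleftrightarrow> X = vneg Y"
  by auto

lemma zset_vneg [simp]: "zset E (vneg X) = zset E X"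
  by (simp add: zset_def)

lemma zset_comp [simp]: "zset E (X \<circ>\<^sub>s Y) = zset E X \<inter> zset E Y"
  by (auto simp: zset_def comp_def)

lemma sorted_wrt_psubset_distinct: "sorted_wrt (\<subset>) L \<Longrightarrow> distinct L"
  by (induction L) auto

lemma sorted_wrt_psubset_subset_last: "sorted_wrt (\<subset>) L \<Longrightarrow> A \<in> set L \<Longrightarrow> A \<subseteq> last L"
proof (induction L)
  case (Cons a L)
  show ?case
  proof (cases "L = []")
    case False
    then have "last L \<in> set L" "last (a # L) = last L"
      by simp_all
    with Cons show ?thesis
      by (cases "A = a") auto
  qed (use Cons in simp)
qed simp

subsection \<open>Flats and their rank\<close>

lemma cocircuit_covector:
  assumes "A \<in> \<C>"
  shows "A \<in> covectors \<C>"
proof -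
  have "A \<circ>\<^sub>s zerovec = A"
    by (rule ext) (simp add: comp_def zerovec_def)
  then show ?thesis
    using covectors.comp[OF assms covectors.zero] by simp
qed

lemma ground_in_flats: "E \<in> flats E \<C>"
proof -
  have "E = zset E zerovec"
    by (simp add: zset_def zerovec_def)
  then show ?thesis
    unfolding flats_def using covectors.zero by blast
qed

lemma zset_Int_in_flats:
  assumes A: "A \<in> \<C>" and "F \<in> flats E \<C>"
  shows "zset E A \<inter> F \<in> flats E \<C>"
proof -
  obtain V where V: "V \<in> covectors \<C>" and "F = zset E V"
    using assms(2) by (auto simp: flats_def)
  then have "zset E A \<inter> F = zset E (A \<circ>\<^sub>s V)"
    by simp
  with covectors.comp[OF A V] show ?thesis
    unfolding flats_def by blast
qed

lemma zset_in_flats: "A \<in> \<C> \<Longrightarrow> zset E A \<in> flats E \<C>"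
  unfolding flats_def using cocircuit_covector by blast

definition flat_chains :: "'e set \<Rightarrow> 'e signvec set \<Rightarrow> 'e set \<Rightarrow> 'e set list set" where
  "flat_chains E \<C> F = {L. L \<noteq> [] \<and> set L \<subseteq> flats E \<C> \<and> sorted_wrt (\<subset>) L \<and> last L = F}"

lemma flat_rank_eq_Max: "flat_rank E \<C> F = Max ((\<lambda>L. length L - 1) ` flat_chains E \<C> F)"
  unfolding flat_rank_def flat_chains_def by (rule arg_cong[where f = Max]) blast

lemma finite_flat_chains:
  assumes "finite E"
  shows "finite (flat_chains E \<C> F)"
proof (rule finite_subset)
  show "flat_chains E \<C> F \<subseteq> {L. set L \<subseteq> Pow E \<and> length L \<le> card (Pow E)}"
  proof
    fix L assume L: "L \<in> flat_chains E \<C> F"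
    have "flats E \<C> \<subseteq> Pow E"
      by (auto simp: flats_def zset_def)
    with L have sub: "set L \<subseteq> Pow E"
      by (auto simp: flat_chains_def)
    have "distinct L"
      using L sorted_wrt_psubset_distinct by (auto simp: flat_chains_def)
    then have "length L = card (set L)"
      by (simp add: distinct_card)
    also have "\<dots> \<le> card (Pow E)"
      using sub assms by (intro card_mono) auto
    finally show "L \<in> {L. set L \<subseteq> Pow E \<and> length L \<le> card (Pow E)}"
      using sub by simp
  qed
  show "finite {L. set L \<subseteq> Pow E \<and> length L \<le> card (Pow E)}"
    using assms by (intro finite_lists_length_le) simp
qed

lemma flat_rank_strict_mono:
  assumes fin: "finite E" and A: "A \<in> flats E \<C>" and B: "B \<in> flats E \<C>" and "A \<subset> B"
  shows "flat_rank E \<C> A < flat_rank E \<C> B"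
proof -
  have "[A] \<in> flat_chains E \<C> A"
    using A by (simp add: flat_chains_def)
  then have "flat_rank E \<C> A \<in> (\<lambda>L. length L - 1) ` flat_chains E \<C> A"
    unfolding flat_rank_eq_Max using finite_flat_chains[OF fin] by (intro Max_in) auto
  then obtain L where L: "L \<in> flat_chains E \<C> A" and rank_A: "flat_rank E \<C> A = length L - 1"
    by blast
  have "X \<subset> B" if "X \<in> set L" for X
  proof -
    have "X \<subseteq> A"
      using sorted_wrt_psubset_subset_last[of L X] L that by (simp add: flat_chains_def)
    with \<open>A \<subset> B\<close> show ?thesis
      by blast
  qed
  with L B have "L @ [B] \<in> flat_chains E \<C> B"
    by (simp add: flat_chains_def sorted_wrt_append)
  then have "length (L @ [B]) - 1 \<le> flat_rank E \<C> B"
    unfolding flat_rank_eq_Max by (rule Max_ge[OF finite_imageI[OF finite_flat_chains[OF fin]] imageI])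
  moreover have "L \<noteq> []"
    using L by (simp add: flat_chains_def)
  ultimately show ?thesis
    using rank_A by (cases L) auto
qed

subsection \<open>Cocircuits through a coline\<close>

locale oriented_matroid_on =
  fixes E :: "'e set" and \<C> :: "'e signvec set"
  assumes oriented_matroid: "oriented_matroid E \<C>"
begin

abbreviation coline :: "'e set \<Rightarrow> bool" where
  "coline N \<equiv> is_flat_of_rank E \<C> N (om_rank E \<C> - 2)"

lemma finite_ground: "finite E"
  using oriented_matroid by (simp add: oriented_matroid_def)

lemma vneg_cocircuit: "A \<in> \<C> \<Longrightarrow> vneg A \<in> \<C>"
  using oriented_matroid by (simp add: oriented_matroid_def)

lemma cocircuit_support: "A \<in> \<C> \<Longrightarrow> A e \<noteq> Zer \<Longrightarrow> e \<in> E"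
  using oriented_matroid unfolding oriented_matroid_def supp_def by blast

lemma cocircuit_eq_if_zset_subset:
  assumes A: "A \<in> \<C>" and B: "B \<in> \<C>" and "zset E B \<subseteq> zset E A"
  shows "A = B \<or> A = vneg B"
proof -
  have "supp A \<subseteq> supp B"
    using assms cocircuit_support[OF A] unfolding supp_def zset_def by blast
  then show ?thesis
    using oriented_matroid A B unfolding oriented_matroid_def by blast
qed

lemma zset_cocircuit_psubset:
  assumes "A \<in> \<C>"
  shows "zset E A \<subset> E"
proof -
  have "A \<noteq> zerovec"
    using oriented_matroid assms by (auto simp: oriented_matroid_def)
  then obtain e where "A e \<noteq> Zer"
    by (auto simp: zerovec_def)
  then show ?thesis
    using cocircuit_support[OF assms] by (auto simp: zset_def)
qed

lemma weak_elimination: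
  assumes "A \<in> \<C>" "B \<in> \<C>" "A \<noteq> vneg B" "e \<in> sep A B"
  obtains Z where "Z \<in> \<C>" "Z e = Zer" "\<And>x. Z x \<noteq> Zer \<Longrightarrow> Z x = A x \<or> Z x = B x"
    "zset E A \<inter> zset E B \<subseteq> zset E Z"
proof -
  obtain Z where Z: "Z \<in> \<C>" "Z e = Zer"
    and pos: "{h. Z h = Pos} \<subseteq> {h. A h = Pos} \<union> {h. B h = Pos}"
    and neg: "{h. Z h = Neg} \<subseteq> {h. A h = Neg} \<union> {h. B h = Neg}"
    using oriented_matroid assms unfolding oriented_matroid_def by blast
  have conformal: "Z x = A x \<or> Z x = B x" if "Z x \<noteq> Zer" for x
    using that pos neg by (cases "Z x") auto
  moreover have "zset E A \<inter> zset E B \<subseteq> zset E Z"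
    using conformal by (fastforce simp: zset_def)
  ultimately show thesis
    using that Z by blast
qed

lemma flat_rank_zset_Int_less:
  assumes A: "A \<in> \<C>" and B: "B \<in> \<C>" and "A \<noteq> B" "A \<noteq> vneg B"
  shows "flat_rank E \<C> (zset E A \<inter> zset E B) + 1 < om_rank E \<C>"
proof -
  have "\<not> zset E A \<subseteq> zset E B"
    using cocircuit_eq_if_zset_subset[OF B A] assms by auto
  then have "flat_rank E \<C> (zset E A \<inter> zset E B) < flat_rank E \<C> (zset E A)"
    using A B by (intro flat_rank_strict_mono finite_ground zset_Int_in_flats zset_in_flats) auto
  moreover have "flat_rank E \<C> (zset E A) < om_rank E \<C>"
    unfolding om_rank_def using A
    by (intro flat_rank_strict_mono finite_ground zset_in_flats ground_in_flats zset_cocircuit_psubset)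
  ultimately show ?thesis
    by linarith
qed

lemma coline_eq_zset_Int:
  assumes N: "coline N" and A: "A \<in> \<C>" and B: "B \<in> \<C>" and AB: "A \<noteq> B" "A \<noteq> vneg B"
    and "N \<subseteq> zset E A" "N \<subseteq> zset E B"
  shows "zset E A \<inter> zset E B = N"
proof (rule ccontr)
  assume "zset E A \<inter> zset E B \<noteq> N"
  with assms have "N \<subset> zset E A \<inter> zset E B"
    by blast
  then have "flat_rank E \<C> N < flat_rank E \<C> (zset E A \<inter> zset E B)"
    using N A B by (intro flat_rank_strict_mono finite_ground zset_Int_in_flats zset_in_flats)
      (auto simp: is_flat_of_rank_def)
  with flat_rank_zset_Int_less[OF A B AB] N show False
    by (simp add: is_flat_of_rank_def)
qed

lemma cocircuits_on_coline_eq: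
  assumes "coline N" "P \<in> \<C>" "Q \<in> \<C>" "N \<subseteq> zset E P" "N \<subseteq> zset E Q"
    and "x \<in> E" "x \<notin> N" "P x = Zer" "Q x = Zer"
  shows "P = Q \<or> P = vneg Q"
  using coline_eq_zset_Int[of N P Q] assms by (auto simp: zset_def)

lemma elimination_on_coline:
  assumes N: "coline N" and A: "A \<in> \<C>" and B: "B \<in> \<C>" and C: "C \<in> \<C>"
    and sub: "N \<subseteq> zset E A" "N \<subseteq> zset E B" "N \<subseteq> zset E C"
    and "A \<noteq> vneg B" "e \<in> sep A B" "C e = Zer"
  obtains Z where "Z = C \<or> Z = vneg C" "\<And>x. Z x \<noteq> Zer \<Longrightarrow> Z x = A x \<or> Z x = B x"
proof -
  obtain Z where Z: "Z \<in> \<C>" "Z e = Zer" and Z_conf: "\<And>x. Z x \<noteq> Zer \<Longrightarrow> Z x = A x \<or> Z x = B x"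
    and "zset E A \<inter> zset E B \<subseteq> zset E Z"
    using weak_elimination[OF A B \<open>A \<noteq> vneg B\<close> \<open>e \<in> sep A B\<close>] by blast
  with sub have "N \<subseteq> zset E Z"
    by blast
  moreover have "e \<in> E" "e \<notin> N"
    using \<open>e \<in> sep A B\<close> cocircuit_support[OF A, of e] sub(1) by (auto simp: sep_def zset_def)
  ultimately have "Z = C \<or> Z = vneg C"
    using cocircuits_on_coline_eq[OF N Z(1) C _ sub(3)] Z(2) \<open>C e = Zer\<close> by blast
  with Z_conf that show thesis
    by blast
qed

lemma coline_sign_agreement:
  assumes N: "coline N" and A: "A \<in> \<C>" and B: "B \<in> \<C>" and C: "C \<in> \<C>"
    and sub: "N \<subseteq> zset E A" "N \<subseteq> zset E B" "N \<subseteq> zset E C"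
    and C_zero: "C g = Zer" "C h = Zer"
    and g: "A g = B g" "A g \<noteq> Zer" and h: "A h \<noteq> Zer" "B h \<noteq> Zer"
  shows "A h = B h"
proof (rule ccontr)
  assume "A h \<noteq> B h"
  with h have h_sep: "h \<in> sep A B"
    by (cases "A h"; cases "B h") (auto simp: sep_def)
  have g_sep: "g \<in> sep A (vneg B)"
    using g by (simp add: sep_def)
  have "A \<noteq> vneg B" "A \<noteq> vneg (vneg B)"
    using g \<open>A h \<noteq> B h\<close> by auto
  obtain Z where Z_C: "Z = C \<or> Z = vneg C"
    and Z_conf: "\<And>x. Z x \<noteq> Zer \<Longrightarrow> Z x = A x \<or> Z x = B x"
    using elimination_on_coline[OF N A B C sub \<open>A \<noteq> vneg B\<close> h_sep C_zero(2)] by blast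
  have "N \<subseteq> zset E (vneg B)"
    using sub(2) by simp
  then obtain Z' where "Z' = C \<or> Z' = vneg C"
    and Z'_conf: "\<And>x. Z' x \<noteq> Zer \<Longrightarrow> Z' x = A x \<or> Z' x = sneg (B x)"
    using elimination_on_coline[OF N A vneg_cocircuit[OF B] C sub(1) _ sub(3) \<open>A \<noteq> vneg (vneg B)\<close>
        g_sep C_zero(1)]
    by auto
  with Z_C C_zero(1) have Z_g: "Z g = Zer" and "Z' = Z \<or> Z' = vneg Z"
    by auto
  \<comment> \<open>Z is conformal to (A, B) and Z' = +-Z to (A, -B): this forces supp Z into supp A or supp B.\<close>
  then have "zset E A \<subseteq> zset E Z \<or> zset E B \<subseteq> zset E Z"
  proof (elim disjE)
    assume "Z' = Z"
    then have "Z x = Zer" if "A x = Zer" for x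
      using Z_conf[of x] Z'_conf[of x] that by (cases "Z x"; cases "B x") auto
    then show ?thesis
      by (auto simp: zset_def)
  next
    assume "Z' = vneg Z"
    then have "Z x = Zer" if "B x = Zer" for x
      using Z_conf[of x] Z'_conf[of x] that by (cases "Z x"; cases "A x") auto
    then show ?thesis
      by (auto simp: zset_def)
  qed
  moreover have "Z \<in> \<C>"
    using Z_C C vneg_cocircuit by blast
  ultimately have "Z = A \<or> Z = vneg A \<or> Z = B \<or> Z = vneg B"
    using cocircuit_eq_if_zset_subset[OF _ A] cocircuit_eq_if_zset_subset[OF _ B] by blast
  with Z_g g show False
    by auto
qed

lemma coline_agree_on_zset:
  assumes N: "coline N" and A: "A \<in> \<C>" and B: "B \<in> \<C>" and C: "C \<in> \<C>"
    and sub: "N \<subseteq> zset E A" "N \<subseteq> zset E B" "N \<subseteq> zset E C"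
    and g: "C g = Zer" "A g = B g" "A g \<noteq> Zer" and h: "C h = Zer"
  shows "A h = B h"
proof (cases "h \<in> E - N")
  case False
  then have "A h = Zer" "B h = Zer"
    using sub cocircuit_support[OF A, of h] cocircuit_support[OF B, of h] by (auto simp: zset_def)
  then show ?thesis
    by simp
next
  case True
  have nonzero: "P h \<noteq> Zer" if P: "P \<in> \<C>" "N \<subseteq> zset E P" "P g \<noteq> Zer" for P
  proof
    assume "P h = Zer"
    then have "P = C \<or> P = vneg C"
      using cocircuits_on_coline_eq[OF N P(1) C P(2) sub(3)] True h by blast
    with g(1) P(3) show False
      by auto
  qed
  show ?thesis
    using coline_sign_agreement[OF N A B C sub g(1) h g(2,3)] nonzero[OF A sub(1)] nonzero[OF B sub(2)] g
    by auto
qed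

subsection \<open>Elimination between comodular cocircuits\<close>

lemma comodular_coline: "comodular E \<C> A B \<Longrightarrow> coline (zset E A \<inter> zset E B)"
  by (simp add: comodular_def is_edge_def)

lemma comodularI:
  assumes "A \<in> \<C>" "B \<in> \<C>" "A \<noteq> B" "A \<noteq> vneg B" "coline (zset E A \<inter> zset E B)"
  shows "comodular E \<C> A B"
  using assms covectors.comp[OF assms(1) cocircuit_covector[OF assms(2)]]
  by (simp add: comodular_def is_edge_def)

lemma comodular_vneg_left:
  assumes "comodular E \<C> A B"
  shows "comodular E \<C> (vneg A) B"
  using assms vneg_cocircuit[of A] comodular_coline[OF assms]
  by (intro comodularI) (auto simp: comodular_def vneg_eq_iff)

lemma modular_elimination_exists:
  assumes AB: "comodular E \<C> A B" and e: "e \<in> sep A B"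
  shows "\<exists>Z\<in>\<C>. Z e = Zer \<and> (\<forall>h. h \<notin> sep A B \<longrightarrow> Z h = (A \<circ>\<^sub>s B) h)"
proof -
  have A: "A \<in> \<C>" and B: "B \<in> \<C>" and "A \<noteq> vneg B"
    using AB by (auto simp: comodular_def)
  obtain Z where Z: "Z \<in> \<C>" "Z e = Zer" and Z_conf: "\<And>x. Z x \<noteq> Zer \<Longrightarrow> Z x = A x \<or> Z x = B x"
    and sub: "zset E A \<inter> zset E B \<subseteq> zset E Z"
    using weak_elimination[OF A B \<open>A \<noteq> vneg B\<close> e] by blast
  have opposite: "A h = sneg (B h)" if "Z h = Zer" for h
  proof -
    have Ae: "A e = vneg B e" "A e \<noteq> Zer"
      using e by (auto simp: sep_def)
    have "A h = vneg B h"
      by (rule coline_agree_on_zset[OF comodular_coline[OF AB] A vneg_cocircuit[OF B] Z(1) _ _ sub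
            Z(2) Ae that]) (auto simp: zset_def)
    then show ?thesis
      by simp
  qed
  have "Z h = (A \<circ>\<^sub>s B) h" if "h \<notin> sep A B" for h
  proof (cases "Z h = Zer")
    case True
    with opposite that show ?thesis
      by (auto simp: sep_def comp_def)
  next
    case False
    with Z_conf[OF False] that show ?thesis
      by (cases "A h"; cases "B h") (auto simp: sep_def comp_def)
  qed
  with Z show ?thesis
    by blast
qed

lemma modular_elimination_unique:
  assumes AB: "comodular E \<C> A B" and e: "e \<in> sep A B"
    and W: "W \<in> \<C>" "W e = Zer" "\<forall>h. h \<notin> sep A B \<longrightarrow> W h = (A \<circ>\<^sub>s B) h"
    and W': "W' \<in> \<C>" "W' e = Zer" "\<forall>h. h \<notin> sep A B \<longrightarrow> W' h = (A \<circ>\<^sub>s B) h"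
  shows "W = W'"
proof -
  have A: "A \<in> \<C>" and Ae: "A e \<noteq> Zer"
    using AB e by (auto simp: comodular_def sep_def)
  have "zset E A \<inter> zset E B \<subseteq> zset E V" if "\<forall>h. h \<notin> sep A B \<longrightarrow> V h = (A \<circ>\<^sub>s B) h" for V
    using that by (auto simp: zset_def sep_def comp_def)
  moreover have "e \<in> E" "e \<notin> zset E A \<inter> zset E B"
    using cocircuit_support[OF A Ae] Ae by (auto simp: zset_def)
  ultimately have "W = W' \<or> W = vneg W'"
    using cocircuits_on_coline_eq[OF comodular_coline[OF AB] W(1) W'(1)] W W' by blast
  moreover have "W \<noteq> vneg W'"
  proof
    assume "W = vneg W'"
    then have "zset E A \<subseteq> zset E W"
      using W(3) W'(3) by (fastforce simp: zset_def sep_def)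
    then have "W = A \<or> W = vneg A"
      by (rule cocircuit_eq_if_zset_subset[OF W(1) A])
    with W(2) Ae show False
      by auto
  qed
  ultimately show ?thesis
    by blast
qed

lemma elim_spec:
  assumes "comodular E \<C> A B" "e \<in> sep A B"
  shows "elim \<C> A B e \<in> \<C>" "elim \<C> A B e e = Zer"
    and "h \<notin> sep A B \<Longrightarrow> elim \<C> A B e h = (A \<circ>\<^sub>s B) h"
proof -
  have "\<exists>!Z. Z \<in> \<C> \<and> Z e = Zer \<and> (\<forall>h. h \<notin> sep A B \<longrightarrow> Z h = (A \<circ>\<^sub>s B) h)"
    using modular_elimination_exists[OF assms] modular_elimination_unique[OF assms] by blast
  then have "elim \<C> A B e \<in> \<C> \<and> elim \<C> A B e e = Zer
      \<and> (\<forall>h. h \<notin> sep A B \<longrightarrow> elim \<C> A B e h = (A \<circ>\<^sub>s B) h)"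
    unfolding elim_def by (rule theI')
  then show "elim \<C> A B e \<in> \<C>" "elim \<C> A B e e = Zer"
    and "h \<notin> sep A B \<Longrightarrow> elim \<C> A B e h = (A \<circ>\<^sub>s B) h"
    by auto
qed

lemma zset_Int_subset_zset_elim:
  assumes "comodular E \<C> A B" "e \<in> sep A B"
  shows "zset E A \<inter> zset E B \<subseteq> zset E (elim \<C> A B e)"
  using elim_spec(3)[OF assms] by (auto simp: zset_def sep_def comp_def)

subsection \<open>Comparing eliminations in an oriented matroid program\<close>

lemma arrow_both_if_contains_coline:
  assumes CX: "comodular E \<C> C X" and X1: "X1 \<in> \<C>" "X1 \<noteq> X"
    and g: "X1 g = X g" "X g \<noteq> Zer" and C_zero: "C g = Zer" "C f = Zer"
    and sub: "zset E X \<inter> zset E C \<subseteq> zset E X1"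
  shows "arrow_both E \<C> g f X1 X"
proof -
  define L where "L = zset E X \<inter> zset E C"
  have X: "X \<in> \<C>" and C: "C \<in> \<C>"
    using CX by (auto simp: comodular_def)
  have L: "coline L"
    using comodular_coline[OF CX] by (simp add: L_def Int_commute)
  have "X1 \<noteq> vneg X"
    using g by auto
  then have X1_X: "zset E X1 \<inter> zset E X = L"
    using coline_eq_zset_Int[OF L X1(1) X X1(2)] sub by (auto simp: L_def)
  with L have X1X: "comodular E \<C> X1 X"
    using comodularI[OF X1(1) X X1(2) \<open>X1 \<noteq> vneg X\<close>] by simp
  have g_sep: "g \<in> sep (vneg X1) X"
    using g by (simp add: sep_def)
  define W where "W = elim \<C> (vneg X1) X g"
  note W = elim_spec[OF comodular_vneg_left[OF X1X] g_sep, folded W_def]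
  have "L \<subseteq> zset E W"
    using zset_Int_subset_zset_elim[OF comodular_vneg_left[OF X1X] g_sep] X1_X by (simp add: W_def)
  moreover have "g \<in> E" "g \<notin> L"
    using cocircuit_support[OF X g(2)] g(2) by (auto simp: L_def zset_def)
  ultimately have "W = C \<or> W = vneg C"
    using cocircuits_on_coline_eq[OF L W(1) C] W(2) C_zero(1) by (auto simp: L_def)
  with C_zero(2) have "W f = Zer"
    by auto
  with X1X g show ?thesis
    unfolding arrow_both_def prog_pair_def W_def by auto
qed

lemma coline_through_corank3_flat:
  assumes F: "is_flat_of_rank E \<C> F (om_rank E \<C> - 3)"
    and Z: "Z \<in> \<C>" and Z1: "Z1 \<in> \<C>" and C: "C \<in> \<C>" and ZC: "Z \<noteq> C" "Z \<noteq> vneg C"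
    and sub: "F \<subseteq> zset E Z" "F \<subseteq> zset E Z1" "F \<subseteq> zset E C"
    and g: "g \<in> E" "g \<notin> F" "Z g = Zer" "Z1 g = Zer" "C g = Zer"
  shows "coline (zset E Z \<inter> zset E C)" "zset E Z \<inter> zset E C \<subseteq> zset E Z1"
proof -
  let ?G = "zset E Z \<inter> zset E C"
  have G_flat: "?G \<in> flats E \<C>" and F_flat: "F \<in> flats E \<C>"
    using F Z C by (simp_all add: zset_Int_in_flats zset_in_flats is_flat_of_rank_def)
  have g_G: "g \<in> ?G"
    using g by (simp add: zset_def)
  with sub g(2) have "flat_rank E \<C> F < flat_rank E \<C> ?G"
    by (intro flat_rank_strict_mono finite_ground F_flat G_flat) auto
  moreover have "flat_rank E \<C> ?G + 1 < om_rank E \<C>"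
    by (rule flat_rank_zset_Int_less[OF Z C ZC])
  ultimately have G_rank: "flat_rank E \<C> ?G = om_rank E \<C> - 2"
    using F unfolding is_flat_of_rank_def by arith
  with G_flat show "coline ?G"
    by (simp add: is_flat_of_rank_def)
  show "?G \<subseteq> zset E Z1"
  proof (rule ccontr)
    assume "\<not> ?G \<subseteq> zset E Z1"
    then have "zset E Z1 \<inter> ?G \<subset> ?G"
      by blast
    then have "flat_rank E \<C> (zset E Z1 \<inter> ?G) < flat_rank E \<C> ?G"
      by (intro flat_rank_strict_mono finite_ground zset_Int_in_flats Z1 G_flat)
    moreover have "F \<subset> zset E Z1 \<inter> ?G"
      using sub g g_G by (auto simp: zset_def)
    then have "flat_rank E \<C> F < flat_rank E \<C> (zset E Z1 \<inter> ?G)"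
      by (intro flat_rank_strict_mono finite_ground F_flat zset_Int_in_flats Z1 G_flat)
    ultimately show False
      using F G_rank unfolding is_flat_of_rank_def by arith
  qed
qed

lemma eliminants_agree_on_zset:
  assumes triple: "modular_triple E \<C> C X Y" and X1Y1: "comodular E \<C> X1 Y1"
    and F: "is_flat_of_rank E \<C> (zset E C \<inter> zset E X \<inter> zset E Y) (om_rank E \<C> - 3)"
    and rank: "om_rank E \<C> \<ge> 3"
    and g: "X g \<noteq> Zer" "Y g = X g" "X1 g = X g" "Y1 g = X g" "C g = Zer"
    and sub: "zset E X \<inter> zset E C \<subseteq> zset E X1" "zset E Y \<inter> zset E C \<subseteq> zset E Y1"
    and f: "C f = Zer"
  shows "elim \<C> (vneg X1) Y1 g f = elim \<C> (vneg X) Y g f"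
proof -
  let ?F = "zset E C \<inter> zset E X \<inter> zset E Y"
  have CX: "comodular E \<C> C X" and CY: "comodular E \<C> C Y" and XY: "comodular E \<C> X Y"
    using triple by (simp_all add: modular_triple_def)
  have C: "C \<in> \<C>" and X: "X \<in> \<C>" and Y: "Y \<in> \<C>" and Y1: "Y1 \<in> \<C>"
    using CX CY X1Y1 by (auto simp: comodular_def)
  have g_sep: "g \<in> sep (vneg X) Y" "g \<in> sep (vneg X1) Y1"
    using g by (auto simp: sep_def)
  define Z Z1 where "Z = elim \<C> (vneg X) Y g" and "Z1 = elim \<C> (vneg X1) Y1 g"
  note Z = elim_spec[OF comodular_vneg_left[OF XY] g_sep(1), folded Z_def]
  note Z1 = elim_spec[OF comodular_vneg_left[OF X1Y1] g_sep(2), folded Z1_def]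
  have "zset E C \<inter> zset E X \<noteq> ?F"
    using comodular_coline[OF CX] F rank by (auto simp: is_flat_of_rank_def)
  then obtain h where h: "h \<in> E" "C h = Zer" "X h = Zer" "Y h \<noteq> Zer"
    by (auto simp: zset_def)
  have "Y h = Y1 h"
    using coline_agree_on_zset[OF comodular_coline[OF CY] Y Y1 C _ _ _ g(5) _ _ h(2)] sub(2) g
    by (auto simp: Int_commute)
  moreover have "X1 h = Zer"
    using sub(1) h by (auto simp: zset_def)
  ultimately have Z_h: "Z h = Y h" "Z1 h = Y h"
    using Z(3)[of h] Z1(3)[of h] h by (auto simp: sep_def comp_def)
  have F_sub: "?F \<subseteq> zset E Z" "?F \<subseteq> zset E Z1" "?F \<subseteq> zset E C"
    using zset_Int_subset_zset_elim[OF comodular_vneg_left[OF XY] g_sep(1)]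
      zset_Int_subset_zset_elim[OF comodular_vneg_left[OF X1Y1] g_sep(2)] sub
    by (auto simp: Z_def Z1_def)
  have g_F: "g \<in> E" "g \<notin> ?F"
    using cocircuit_support[OF X g(1)] g(1) by (auto simp: zset_def)
  have "Z \<noteq> C" "Z \<noteq> vneg C"
    using Z_h h by auto
  note G = coline_through_corank3_flat[OF F Z(1) Z1(1) C this F_sub g_F Z(2) Z1(2) g(5)]
  then have "Z f = Z1 f"
    using coline_agree_on_zset[OF G(1) Z(1) Z1(1) C _ G(2) _ h(2) _ _ f] Z_h h by auto
  then show ?thesis
    by (simp add: Z_def Z1_def)
qed

end

theorem lemma4p4:
  fixes E :: "'e set" and \<C> :: "'e signvec set" and g f :: 'e
    and C X Y X1 Y1 :: "'e signvec"
  assumes prog: "om_program E \<C> g f"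
    and rank: "om_rank E \<C> \<ge> 3"
    and triple: "modular_triple E \<C> C X Y"
    and flat3: "is_flat_of_rank E \<C> (zset E (C \<circ>\<^sub>s X \<circ>\<^sub>s Y)) (om_rank E \<C> - 3)"
    and XgYg: "X g = Pos" "Y g = Pos"
    and Cgf: "C g = Zer" "C f = Zer"
    and X1Y1: "X1 \<in> \<C>" "Y1 \<in> \<C>" "X1 \<noteq> Y1" "X1 g = Pos" "Y1 g = Pos"
    and zX1: "zset E (X \<circ>\<^sub>s C) \<subseteq> zset E X1"
    and zY1: "zset E (Y \<circ>\<^sub>s C) \<subseteq> zset E Y1"
    and neqX: "X \<noteq> X1" "X1 \<noteq> C"
    and neqY: "Y \<noteq> Y1" "Y1 \<noteq> C"
    and edge: "is_edge E \<C> (X1 \<circ>\<^sub>s Y1)"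
  shows "arrow_both E \<C> g f X1 X \<and> arrow_both E \<C> g f Y1 Y
         \<and> (arrow_to E \<C> g f X1 Y1 \<longleftrightarrow> arrow_to E \<C> g f X Y)"
proof -
  interpret oriented_matroid_on E \<C>
    using prog by unfold_locales (simp add: om_program_def)
  have CX: "comodular E \<C> C X" and CY: "comodular E \<C> C Y" and XY: "comodular E \<C> X Y"
    using triple by (simp_all add: modular_triple_def)
  have "X1 \<noteq> vneg Y1"
    using X1Y1 by auto
  with X1Y1 edge have X1Y1_comodular: "comodular E \<C> X1 Y1"
    by (simp add: comodular_def)
  have "arrow_both E \<C> g f X1 X" "arrow_both E \<C> g f Y1 Y"
    using arrow_both_if_contains_coline[OF CX X1Y1(1) neqX(1)[symmetric]]
      arrow_both_if_contains_coline[OF CY X1Y1(2) neqY(1)[symmetric]] XgYg X1Y1 Cgf zX1 zY1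
    by simp_all
  moreover have "elim \<C> (vneg X1) Y1 g f = elim \<C> (vneg X) Y g f"
    using eliminants_agree_on_zset[OF triple X1Y1_comodular _ rank] flat3 XgYg X1Y1 Cgf zX1 zY1
    by (simp add: Int_assoc)
  moreover have "prog_pair E \<C> g X1 Y1" "prog_pair E \<C> g X Y"
    using X1Y1_comodular XY XgYg X1Y1 by (simp_all add: prog_pair_def)
  ultimately show ?thesis
    by (simp add: arrow_to_def)
qed

end
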